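(* Let $d\ge1$. Let $G_A=(V_A,E_A)$ with configuration $\mathbf{p}^A$ and $G_B=(V_B,E_B)$ with configuration $\mathbf{p}^B$ be frameworks in general position in $\mathbb{R}^d$, with $V_C=V_A\cap V_B$ a proper subset of both $V_A$ and $V_B$, $|V_C|\ge d+1$, and $\mathbf{p}^A_i=\mathbf{p}^B_i$ for $i\in V_C$. Let $\Omega_A$, $\Omega_B$ be positive semidefinite stress matrices of nullity $d+1$ of $G_A(\mathbf{p}^A)$, $G_B(\mathbf{p}^B)$, and assume moreover that $G_A(\mathbf{p}^A)$ is infinitesimally rigid. Let $F=\{\{i_k,j_k\}:k=1,\dots,K\}$ be the set of edges of $E_B\setminus E_A$ with both endpoints in $V_C$. Then there is a real symmetric $V_A\times V_A$ matrix $\Omega_{AK}$ which is a stress matrix of the framework with graph $(V_A,E_A\cup F)$ and configuration $\mathbf{p}^A$ and satisfies $(\Omega_{AK})_{i_kj_k}=-(\Omega_B)_{i_kj_k}$ for $k=1,\dots,K$ (its entries are obtained from the rigidity matrix of $G_A(\mathbf{p}^A)$ and the entries of $\Omega_B$ by solving $K$ systems of linear equations); and for a large enough constant $c>0$, the matrix $$\widetilde\Omega_{re}=c\,\widetilde\Omega_A+\widetilde\Omega_{AK}+\widetilde\Omega_B$$ is a positive semidefinite stress matrix of nullity $d+1$ of the edge-reduced framework attachment, i.e. of the framework with graph $(V_A\cup V_B,(E_A\cup E_B)\setminus F)$ and configuration $\mathbf{p}$ where $\mathbf{p}_i=\mathbf{p}^A_i$ ($i\in V_A$), $\mathbf{p}_i=\mathbf{p}^B_i$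 ($i\in V_B$). Here $\widetilde X$ denotes the extension by zeros of a matrix $X$ indexed by $V_A$ or $V_B$ to a matrix indexed by $V_A\cup V_B$.
   Context: A framework $G(\mathbf{p})$ in $\mathbb{R}^d$ is a finite graph $G=(V,E)$ with points $\mathbf{p}_i\in\mathbb{R}^d$; general position means any $d+1$ distinct vertices have affinely independent points. A stress matrix of $G(\mathbf{p})$ is a real $|V|\times|V|$ matrix $\Omega$ with: $\Omega_{ij}=\Omega_{ji}$; $\Omega_{ij}=0$ whenever $i\ne j$ and $\{i,j\}\notin E$; $\sum_j\Omega_{ij}=0$ and $\sum_j\Omega_{ij}\mathbf{p}_j=0$ for all $i$. Nullity means $\dim\ker$. The rigidity matrix $df$ of $G(\mathbf{p})$ is the $|E|\times |V|d$ matrix whose row for edge $\{i,j\}$ has $\mathbf{p}_i-\mathbf{p}_j$ in the $d$ columns of vertex $i$, $\mathbf{p}_j-\mathbf{p}_i$ in the columns of vertex $j$, and zeros elsewhere; $G(\mathbf{p})$ is infinitesimally rigid if $\operatorname{rank}(df)=|V|d-\binom{d+1}{2}$. *)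

theory Defs
  imports "HOL-Analysis.Analysis" "HOL-Library.Function_Algebras"
begin

text \<open>Frameworks: a finite vertex set V of an arbitrary vertex type 'v, an edge set E of
  two-element subsets of V, and a configuration p :: 'v => 'a in a Euclidean space 'a
  (so d = DIM('a) >= 1).  Matrices indexed by V are functions 'v => 'v => real of which
  only the entries on V x V matter.\<close>

definition graph_on :: "'v set \<Rightarrow> 'v set set \<Rightarrow> bool" where
  "graph_on V E \<longleftrightarrow> finite V \<and> (\<forall>e\<in>E. e \<subseteq> V \<and> card e = 2)"

definition general_position :: "'v set \<Rightarrow> ('v \<Rightarrow> 'a::euclidean_space) \<Rightarrow> bool" where
  "general_position V p \<longleftrightarrow>
     (\<forall>S\<subseteq>V. card S = DIM('a) + 1 \<longrightarrow> inj_on p S \<and> \<not> affine_dependent (p ` S))"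

definition stress_matrix ::
  "'v set \<Rightarrow> 'v set set \<Rightarrow> ('v \<Rightarrow> 'a::euclidean_space) \<Rightarrow> ('v \<Rightarrow> 'v \<Rightarrow> real) \<Rightarrow> bool" where
  "stress_matrix V E p \<Omega> \<longleftrightarrow>
     (\<forall>i\<in>V. \<forall>j\<in>V. \<Omega> i j = \<Omega> j i) \<and>
     (\<forall>i\<in>V. \<forall>j\<in>V. i \<noteq> j \<and> {i, j} \<notin> E \<longrightarrow> \<Omega> i j = 0) \<and>
     (\<forall>i\<in>V. (\<Sum>j\<in>V. \<Omega> i j) = 0) \<and>
     (\<forall>i\<in>V. (\<Sum>j\<in>V. \<Omega> i j *\<^sub>R p j) = 0)"

definition psd_on :: "'v set \<Rightarrow> ('v \<Rightarrow> 'v \<Rightarrow> real) \<Rightarrow> bool" where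
  "psd_on V \<Omega> \<longleftrightarrow> (\<forall>x::'v \<Rightarrow> real. (\<Sum>i\<in>V. \<Sum>j\<in>V. x i * \<Omega> i j * x j) \<ge> 0)"

definition kernel_on :: "'v set \<Rightarrow> ('v \<Rightarrow> 'v \<Rightarrow> real) \<Rightarrow> ('v \<Rightarrow> real) set" where
  "kernel_on V \<Omega> = {x. (\<forall>i. i \<notin> V \<longrightarrow> x i = 0) \<and> (\<forall>i\<in>V. (\<Sum>j\<in>V. \<Omega> i j * x j) = 0)}"

definition nullity_on :: "'v set \<Rightarrow> ('v \<Rightarrow> 'v \<Rightarrow> real) \<Rightarrow> nat" where
  "nullity_on V \<Omega> = vector_space.dim (\<lambda>c (x::'v \<Rightarrow> real) i. c * x i) (kernel_on V \<Omega>)"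

text \<open>Row of the rigidity matrix for the edge {i,j}, as an element of ('v => 'a)
  (a vector of R^(|V| d)): p_i - p_j in the block of i, p_j - p_i in the block of j.\<close>
definition rigidity_row :: "('v \<Rightarrow> 'a::euclidean_space) \<Rightarrow> 'v \<Rightarrow> 'v \<Rightarrow> ('v \<Rightarrow> 'a)" where
  "rigidity_row p i j = (\<lambda>k. if k = i then p i - p j else if k = j then p j - p i else 0)"

definition rigidity_rank :: "'v set set \<Rightarrow> ('v \<Rightarrow> 'a::euclidean_space) \<Rightarrow> nat" where
  "rigidity_rank E p = vector_space.dim (\<lambda>c (u::'v \<Rightarrow> 'a) k. c *\<^sub>R u k)
      {rigidity_row p i j | i j. {i, j} \<in> E}"

definition inf_rigid :: "'v set \<Rightarrow> 'v set set \<Rightarrow> ('v \<Rightarrow> 'a::euclidean_space) \<Rightarrow> bool" where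
  "inf_rigid V E p \<longleftrightarrow> rigidity_rank E p = card V * DIM('a) - ((DIM('a) + 1) choose 2)"

definition ext0 :: "'v set \<Rightarrow> ('v \<Rightarrow> 'v \<Rightarrow> real) \<Rightarrow> ('v \<Rightarrow> 'v \<Rightarrow> real)" where
  "ext0 V X = (\<lambda>i j. if i \<in> V \<and> j \<in> V then X i j else 0)"

end

theory Submission
  imports Defs
begin

text \<open>A stress vanishes on the affine functions i \<mapsto> a \<bullet> p i + b of its configuration; in
  general position these form a (d+1)-dimensional space, so nullity d+1 means that they are
  exactly the kernel. Infinitesimal rigidity of G_A says that the rows of its rigidity matrix span
  the orthogonal complement of the (d+1 choose 2) infinitesimal motions, so the row of any pair
  {i,j} of F is a combination of edge rows; this combination is a self-stress of G_A + ij, and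
  summing these gives a stress Omega_AK of G_A + F with entries -Omega_B on F, which cancel in
  the sum. Since Omega_AK also vanishes on the affine functions, which form the kernel of the
  semidefinite Omega_A, compactness of the unit sphere of their complement makes
  Omega_AK + c Omega_A semidefinite for large c. Any larger weight on Omega_A keeps a positive
  multiple of Omega_A, so a kernel vector of the sum is affine on V_A and on V_B; both affine
  functions agree on d+1 affinely independent common vertices, hence coincide.\<close>

section \<open>Affine functions and the kernel of a stress\<close>

interpretation rfun: vector_space "\<lambda>c (x::'v\<Rightarrow>real) i. c * x i"
  by unfold_locales (auto simp: fun_eq_iff algebra_simps)

interpretation vfun: vector_space "\<lambda>c (u::'v\<Rightarrow>'a::real_vector) k. c *\<^sub>R u k"
  by unfold_locales (auto simp: fun_eq_iff algebra_simps)

lemma sum_fun_apply: "(sum f A) x = sum (\<lambda>a. f a x) A"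
  by (induct A rule: infinite_finite_induct) auto

definition affine_frame :: "('v \<Rightarrow> 'a::euclidean_space) \<Rightarrow> 'v set \<Rightarrow> bool" where
  "affine_frame p S \<longleftrightarrow> inj_on p S \<and> card S = DIM('a) + 1 \<and> \<not> affine_dependent (p ` S)"

lemma affine_frame_cong:
  assumes "\<And>i. i \<in> S \<Longrightarrow> p i = q i"
  shows "affine_frame p S \<longleftrightarrow> affine_frame q S"
proof -
  have "inj_on p S = inj_on q S" by (rule inj_on_cong) (use assms in simp)
  moreover have "p ` S = q ` S" by (rule image_cong) (use assms in simp_all)
  ultimately show ?thesis unfolding affine_frame_def by simp
qed

lemma affine_eq_0_on_frame:
  fixes p :: "'v \<Rightarrow> 'a::euclidean_space"
  assumes "affine_frame p S" and "\<forall>i\<in>S. a \<bullet> p i + b = 0"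
  shows "a = 0 \<and> b = 0"
proof -
  have "aff_dim (p ` S) = DIM('a)"
    using assms(1) aff_dim_affine_independent card_image unfolding affine_frame_def by fastforce
  then have hull: "affine hull (p ` S) = UNIV" using aff_dim_eq_full by blast
  have "p ` S \<subseteq> {x. a \<bullet> x = -b}" using assms(2) by (force simp: algebra_simps)
  then have "affine hull (p ` S) \<subseteq> {x. a \<bullet> x = -b}"
    by (rule hull_minimal) (rule affine_hyperplane)
  then have all: "\<And>x. a \<bullet> x = -b" using hull by auto
  from all[of 0] all[of a] show ?thesis by simp
qed

lemma general_position_obtains_frame:
  fixes p :: "'v \<Rightarrow> 'a::euclidean_space"
  assumes "general_position V p" "C \<subseteq> V" "DIM('a) + 1 \<le> card C"
  obtains S where "S \<subseteq> C" "affine_frame p S"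
proof -
  obtain S where "S \<subseteq> C" "card S = DIM('a) + 1"
    using obtain_subset_with_card_n[OF assms(3)] by blast
  with assms that show ?thesis unfolding general_position_def affine_frame_def by blast
qed

definition affine_fun :: "'v set \<Rightarrow> ('v \<Rightarrow> 'a::euclidean_space) \<Rightarrow> 'a \<Rightarrow> real \<Rightarrow> 'v \<Rightarrow> real" where
  "affine_fun V p a b = (\<lambda>i. if i \<in> V then a \<bullet> p i + b else 0)"

definition affine_funs :: "'v set \<Rightarrow> ('v \<Rightarrow> 'a::euclidean_space) \<Rightarrow> ('v \<Rightarrow> real) set" where
  "affine_funs V p = range (\<lambda>(a, b). affine_fun V p a b)"

lemma mem_affine_funs: "x \<in> affine_funs V p \<longleftrightarrow> (\<exists>a b. x = affine_fun V p a b)"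
  by (auto simp: affine_funs_def)

lemma linear_affine_fun:
  "Vector_Spaces.linear scaleR (\<lambda>c (x::'v\<Rightarrow>real) i. c * x i) (\<lambda>(a, b). affine_fun V p a b)"
  unfolding Vector_Spaces.linear_def module_hom_def module_hom_axioms_def
  by (auto simp: real_vector.vector_space_axioms rfun.vector_space_axioms real_vector.module_axioms
      rfun.module_axioms affine_fun_def fun_eq_iff algebra_simps)

lemma subspace_affine_funs:
  "rfun.subspace (affine_funs (V::'v set) (p::'v \<Rightarrow> 'a::euclidean_space))"
  unfolding affine_funs_def
  using module_hom.subspace_image[OF linear_affine_fun[unfolded Vector_Spaces.linear_def,
      THEN conjunct2, THEN conjunct2] subspace_UNIV[unfolded subspace_raw_def]] .

lemma stress_matrix_sym: "stress_matrix V E p M \<Longrightarrow> i \<in> V \<Longrightarrow> j \<in> V \<Longrightarrow> M i j = M j i"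
  unfolding stress_matrix_def by metis

lemma stress_matrix_non_edge:
  "stress_matrix V E p M \<Longrightarrow> i \<in> V \<Longrightarrow> j \<in> V \<Longrightarrow> i \<noteq> j \<Longrightarrow> {i, j} \<notin> E \<Longrightarrow> M i j = 0"
  unfolding stress_matrix_def by metis

lemma stress_matrix_row_sum: "stress_matrix V E p M \<Longrightarrow> i \<in> V \<Longrightarrow> (\<Sum>j\<in>V. M i j) = 0"
  unfolding stress_matrix_def by metis

lemma stress_matrix_equilibrium:
  "stress_matrix V E p M \<Longrightarrow> i \<in> V \<Longrightarrow> (\<Sum>j\<in>V. M i j *\<^sub>R p j) = 0"
  unfolding stress_matrix_def by metis

lemma stress_matrix_affine_eq_0:
  assumes "stress_matrix V E p M" "i \<in> V"
  shows "(\<Sum>j\<in>V. M i j * (a \<bullet> p j + b)) = 0"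
proof -
  have "(\<Sum>j\<in>V. M i j * (a \<bullet> p j + b)) = a \<bullet> (\<Sum>j\<in>V. M i j *\<^sub>R p j) + b * (\<Sum>j\<in>V. M i j)"
    by (simp add: algebra_simps sum.distrib inner_sum_right sum_distrib_left)
  then show ?thesis
    using stress_matrix_equilibrium[OF assms] stress_matrix_row_sum[OF assms] by simp
qed

lemma affine_funs_subset_kernel:
  assumes "stress_matrix V E p M"
  shows "affine_funs V p \<subseteq> kernel_on V M"
proof -
  have "(\<Sum>j\<in>V. M i j * affine_fun V p a b j) = (\<Sum>j\<in>V. M i j * (a \<bullet> p j + b))" for i a b
    by (rule sum.cong) (auto simp: affine_fun_def)
  with stress_matrix_affine_eq_0[OF assms] show ?thesis
    by (auto simp: kernel_on_def affine_funs_def affine_fun_def)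
qed

lemma dim_affine_funs:
  fixes p :: "'v \<Rightarrow> 'a::euclidean_space"
  assumes "affine_frame p S" "S \<subseteq> V"
  shows "rfun.dim (affine_funs V p) = DIM('a) + 1"
proof -
  interpret finite_dimensional_vector_space_pair_1 "scaleR :: real \<Rightarrow> ('a \<times> real) \<Rightarrow> _" Basis
    "\<lambda>c (x::'v\<Rightarrow>real) i. c * x i" by unfold_locales
  have "inj (\<lambda>(a, b). affine_fun V p a b)"
  proof (rule injI, clarify)
    fix a b a' b' assume eq: "affine_fun V p a b = affine_fun V p a' b'"
    have "\<forall>i\<in>S. (a - a') \<bullet> p i + (b - b') = 0"
    proof
      fix i assume "i \<in> S"
      have "affine_fun V p a b i = affine_fun V p a' b' i" using eq by simp
      with \<open>i \<in> S\<close> assms(2) have "a \<bullet> p i + b = a' \<bullet> p i + b'"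
        by (auto simp: affine_fun_def)
      then show "(a - a') \<bullet> p i + (b - b') = 0" by (simp add: inner_diff_left)
    qed
    from affine_eq_0_on_frame[OF assms(1) this] show "a = a' \<and> b = b'" by simp
  qed
  then have "inj_on (\<lambda>(a, b). affine_fun V p a b) (module.span scaleR (UNIV :: ('a \<times> real) set))"
    by (rule inj_on_subset) simp
  from dim_image_eq[OF linear_affine_fun this] show ?thesis
    by (simp add: affine_funs_def dim_raw_def[symmetric])
qed

lemma kernel_eq_affine_funs:
  fixes p :: "'v \<Rightarrow> 'a::euclidean_space"
  assumes st: "stress_matrix V E p M" and nul: "nullity_on V M = DIM('a) + 1"
    and S: "affine_frame p S" "S \<subseteq> V"
  shows "kernel_on V M = affine_funs V p"
proof
  let ?A = "affine_funs V p"
  show A: "?A \<subseteq> kernel_on V M" by (rule affine_funs_subset_kernel[OF st])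
  obtain B where B: "B \<subseteq> kernel_on V M" "rfun.independent B" "kernel_on V M \<subseteq> rfun.span B"
    "card B = rfun.dim (kernel_on V M)"
    using rfun.basis_exists by blast
  have cB: "card B = DIM('a) + 1" using B(4) nul unfolding nullity_on_def by simp
  then have finB: "finite B" by (intro card_ge_0_finite) simp
  obtain BA where BA: "BA \<subseteq> ?A" "rfun.independent BA" "?A \<subseteq> rfun.span BA"
    "card BA = rfun.dim ?A"
    using rfun.basis_exists by blast
  have cBA: "card BA = DIM('a) + 1" using BA(4) dim_affine_funs[OF S] by simp
  then have finBA: "finite BA" by (intro card_ge_0_finite) simp
  have spA: "rfun.span BA \<subseteq> ?A" using BA(1) subspace_affine_funs by (rule rfun.span_minimal)
  show "kernel_on V M \<subseteq> ?A"
  proof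
    fix x assume x: "x \<in> kernel_on V M"
    show "x \<in> ?A"
    proof (rule ccontr)
      assume "x \<notin> ?A"
      then have nsp: "x \<notin> rfun.span BA" using spA by blast
      then have "rfun.independent (insert x BA)" using rfun.independent_insertI BA(2) by blast
      moreover have "insert x BA \<subseteq> rfun.span B" using x BA(1) B(3) A by blast
      ultimately have "card (insert x BA) \<le> card B" using rfun.independent_span_bound[OF finB] by blast
      moreover have "card (insert x BA) = card BA + 1"
        using nsp rfun.span_base finBA by (subst card_insert_disjoint) auto
      ultimately show False using cB cBA by simp
    qed
  qed
qed

section \<open>Quadratic forms of stresses\<close>

definition quad_form :: "'v set \<Rightarrow> ('v \<Rightarrow> 'v \<Rightarrow> real) \<Rightarrow> ('v \<Rightarrow> real) \<Rightarrow> real" where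
  "quad_form V M x = (\<Sum>i\<in>V. \<Sum>j\<in>V. x i * M i j * x j)"

lemma psd_on_quad_form: "psd_on V M \<longleftrightarrow> (\<forall>x. 0 \<le> quad_form V M x)"
  by (simp add: psd_on_def quad_form_def)

lemma quad_form_cong: "(\<And>i. i \<in> V \<Longrightarrow> x i = y i) \<Longrightarrow> quad_form V M x = quad_form V M y"
  unfolding quad_form_def by (intro sum.cong refl) auto

lemma quad_form_scale: "quad_form V M (\<lambda>i. c * x i) = c\<^sup>2 * quad_form V M x"
  unfolding quad_form_def sum_distrib_left
  by (intro sum.cong refl) (simp add: power2_eq_square algebra_simps)

lemma quad_form_eq_sum_rows: "quad_form V M x = (\<Sum>i\<in>V. x i * (\<Sum>j\<in>V. M i j * x j))"
  unfolding quad_form_def by (simp add: sum_distrib_left mult.assoc)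

lemma quad_form_kernel: "x \<in> kernel_on V M \<Longrightarrow> quad_form V M x = 0"
  by (simp add: quad_form_eq_sum_rows kernel_on_def)

lemma quad_form_add:
  "quad_form V M (\<lambda>i. x i + y i) = quad_form V M x + (\<Sum>i\<in>V. x i * (\<Sum>j\<in>V. M i j * y j))
     + (\<Sum>i\<in>V. y i * (\<Sum>j\<in>V. M i j * x j)) + quad_form V M y"
  unfolding quad_form_eq_sum_rows
  by (simp add: algebra_simps sum.distrib sum_distrib_left)

lemma quad_form_add_kernel:
  assumes sym: "\<And>i j. i \<in> V \<Longrightarrow> j \<in> V \<Longrightarrow> M i j = M j i"
    and y: "\<And>i. i \<in> V \<Longrightarrow> (\<Sum>j\<in>V. M i j * y j) = 0"
  shows "quad_form V M (\<lambda>i. x i + y i) = quad_form V M x"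
proof -
  have "(\<Sum>i\<in>V. y i * (\<Sum>j\<in>V. M i j * x j)) = (\<Sum>j\<in>V. \<Sum>i\<in>V. x j * M j i * y i)"
    unfolding sum_distrib_left by (subst sum.swap) (intro sum.cong refl; simp add: sym)
  also have "\<dots> = 0"
    by (simp add: y mult.assoc flip: sum_distrib_left)
  finally show ?thesis
    unfolding quad_form_add by (simp add: y quad_form_eq_sum_rows[of V M y])
qed

lemma quad_form_diff_affine:
  assumes "stress_matrix V E p M"
  shows "quad_form V M (\<lambda>i. x i - (a \<bullet> p i + b)) = quad_form V M x"
proof -
  have "quad_form V M (\<lambda>i. (x i - (a \<bullet> p i + b)) + (a \<bullet> p i + b))
      = quad_form V M (\<lambda>i. x i - (a \<bullet> p i + b))"
    by (rule quad_form_add_kernel[OF stress_matrix_sym[OF assms] stress_matrix_affine_eq_0[OF assms]])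
  then show ?thesis by simp
qed

lemma nonneg_quadratic_imp_linear_eq_0:
  fixes g q :: real
  assumes "\<And>t. 0 \<le> 2 * t * g + t\<^sup>2 * q"
  shows "g = 0"
proof -
  define D where "D = \<bar>q\<bar> + 1"
  have D: "D > 0" unfolding D_def by simp
  have "0 \<le> 2 * (- g / D) * g + (- g / D)\<^sup>2 * q" by (rule assms)
  also have "\<dots> = g\<^sup>2 * (q - 2 * D) / D\<^sup>2"
    using D by (simp add: power2_eq_square field_simps)
  finally have "0 \<le> g\<^sup>2 * (q - 2 * D)"
    using D by (simp add: zero_le_divide_iff)
  moreover have "q - 2 * D < 0" unfolding D_def by (simp add: abs_if)
  ultimately have "g\<^sup>2 \<le> 0" by (simp add: zero_le_mult_iff)
  then show ?thesis by simp
qed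

lemma sum_delta_mult:
  fixes f :: "'a \<Rightarrow> 'b::semiring_0"
  assumes "finite V" "i \<in> V"
  shows "(\<Sum>k\<in>V. (if k = i then t else 0) * f k) = t * f i"
    and "(\<Sum>k\<in>V. f k * (if k = i then t else 0)) = f i * t"
  using assms by (simp_all add: if_distrib[of "\<lambda>u. u * _"] if_distrib[of "\<lambda>u. _ * u"] cong: if_cong)

text \<open>A null vector of a positive semidefinite form lies in its kernel: perturbing it in
  the direction of the i-th unit vector shows that the i-th row vanishes on it.\<close>

lemma psd_quad_form_eq_0_imp_kernel:
  assumes fin: "finite V" and psd: "psd_on V M"
    and sym: "\<And>i j. i \<in> V \<Longrightarrow> j \<in> V \<Longrightarrow> M i j = M j i"
    and z: "quad_form V M x = 0"
  shows "(\<lambda>i. if i \<in> V then x i else 0) \<in> kernel_on V M"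
proof -
  have row_zero: "(\<Sum>j\<in>V. M i j * x j) = 0" if i: "i \<in> V" for i
  proof (rule nonneg_quadratic_imp_linear_eq_0)
    fix t
    let ?e = "\<lambda>k. if k = i then t else 0 :: real"
    have "(\<Sum>k\<in>V. x k * (\<Sum>j\<in>V. M k j * ?e j)) = (\<Sum>k\<in>V. x k * (M i k * t))"
    proof (intro sum.cong refl)
      fix k assume "k \<in> V"
      then show "x k * (\<Sum>j\<in>V. M k j * ?e j) = x k * (M i k * t)"
        using fin i sum_delta_mult(2)[OF fin i, of "M k" t] sym[of k i] by simp
    qed
    also have "\<dots> = t * (\<Sum>j\<in>V. M i j * x j)"
      by (simp add: sum_distrib_left algebra_simps)
    finally have row1: "(\<Sum>k\<in>V. x k * (\<Sum>j\<in>V. M k j * ?e j)) = t * (\<Sum>j\<in>V. M i j * x j)" .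
    have row2: "(\<Sum>k\<in>V. ?e k * (\<Sum>j\<in>V. M k j * x j)) = t * (\<Sum>j\<in>V. M i j * x j)"
      using fin i by (rule sum_delta_mult)
    have diag: "quad_form V M ?e = t\<^sup>2 * M i i"
      unfolding quad_form_eq_sum_rows using fin i by (simp add: sum_delta_mult power2_eq_square)
    have "0 \<le> quad_form V M (\<lambda>k. x k + ?e k)" using psd by (simp add: psd_on_quad_form)
    also have "\<dots> = 2 * t * (\<Sum>j\<in>V. M i j * x j) + t\<^sup>2 * M i i"
      unfolding quad_form_add z row1 row2 diag by simp
    finally show "0 \<le> 2 * t * (\<Sum>j\<in>V. M i j * x j) + t\<^sup>2 * M i i" .
  qed
  have "(\<Sum>j\<in>V. M i j * (if j \<in> V then x j else 0)) = (\<Sum>j\<in>V. M i j * x j)" for i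
    by (rule sum.cong) simp_all
  with row_zero show ?thesis by (simp add: kernel_on_def)
qed

text \<open>Orthogonal projection onto the affine functions: the residual is orthogonal, in the
  standard inner product on functions on V, to the constants and to all coordinate functions.\<close>

lemma affine_residual_exists:
  fixes p :: "'v \<Rightarrow> 'a::euclidean_space"
  assumes fin: "finite V" and frame: "affine_frame p S" "S \<subseteq> V"
  obtains a b where "(\<Sum>i\<in>V. (x i - (a \<bullet> p i + b)) *\<^sub>R p i) = 0"
    and "(\<Sum>i\<in>V. x i - (a \<bullet> p i + b)) = 0"
proof -
  define L where "L = (\<lambda>(a::'a, b::real).
    ((\<Sum>i\<in>V. (a \<bullet> p i + b) *\<^sub>R p i), (\<Sum>i\<in>V. a \<bullet> p i + b)))"
  have lin: "linear L"
    by (rule linearI) (auto simp: L_def inner_add_left scaleR_add_left sum.distrib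
        scaleR_sum_right sum_distrib_left algebra_simps)
  have "inj L"
    unfolding linear_injective_0[OF lin]
  proof (clarify)
    fix a b assume "L (a, b) = 0"
    then have s1: "(\<Sum>i\<in>V. (a \<bullet> p i + b) *\<^sub>R p i) = 0" and s2: "(\<Sum>i\<in>V. a \<bullet> p i + b) = 0"
      by (simp_all add: L_def prod_eq_iff)
    have "(\<Sum>i\<in>V. (a \<bullet> p i + b)\<^sup>2) = a \<bullet> (\<Sum>i\<in>V. (a \<bullet> p i + b) *\<^sub>R p i) + b * (\<Sum>i\<in>V. a \<bullet> p i + b)"
      by (simp add: inner_sum_right sum_distrib_left sum.distrib[symmetric] power2_eq_square
          algebra_simps)
    then have "\<forall>i\<in>V. (a \<bullet> p i + b)\<^sup>2 = 0"
      using s1 s2 sum_nonneg_eq_0_iff[OF fin, of "\<lambda>i. (a \<bullet> p i + b)\<^sup>2"] by simp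
    then have "\<forall>i\<in>S. a \<bullet> p i + b = 0" using frame(2) by auto
    from affine_eq_0_on_frame[OF frame(1) this] show "(a, b) = 0" by (simp add: zero_prod_def)
  qed
  then obtain z where z: "L z = ((\<Sum>i\<in>V. x i *\<^sub>R p i), (\<Sum>i\<in>V. x i))"
    using linear_injective_imp_surjective[OF lin] by (metis surjD)
  obtain a b where "z = (a, b)" by (cases z)
  with z show ?thesis
    by (intro that[of a b]) (simp_all add: L_def scaleR_diff_left sum_subtractf)
qed

lemma abs_quad_form_le:
  assumes "\<And>i. i \<in> V \<Longrightarrow> \<bar>r i\<bar> \<le> 1"
  shows "\<bar>quad_form V M r\<bar> \<le> (\<Sum>i\<in>V. \<Sum>j\<in>V. \<bar>M i j\<bar>)"
proof -
  have "\<bar>r i * M i j * r j\<bar> \<le> \<bar>M i j\<bar>" if "i \<in> V" "j \<in> V" for i j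
  proof -
    have "\<bar>r i\<bar> * \<bar>r j\<bar> \<le> 1" using assms that by (intro mult_le_one) auto
    then have "\<bar>M i j\<bar> * (\<bar>r i\<bar> * \<bar>r j\<bar>) \<le> \<bar>M i j\<bar>" by (simp add: mult_left_le)
    then show ?thesis by (simp add: abs_mult algebra_simps)
  qed
  then have "(\<Sum>i\<in>V. \<Sum>j\<in>V. \<bar>r i * M i j * r j\<bar>) \<le> (\<Sum>i\<in>V. \<Sum>j\<in>V. \<bar>M i j\<bar>)"
    by (intro sum_mono) auto
  moreover have "\<bar>quad_form V M r\<bar> \<le> (\<Sum>i\<in>V. \<Sum>j\<in>V. \<bar>r i * M i j * r j\<bar>)"
    unfolding quad_form_def by (rule order_trans[OF sum_abs sum_mono[OF sum_abs]])
  ultimately show ?thesis by linarith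
qed

text \<open>Compactness argument: on the unit sphere of R the form A has a positive minimum,
  which dominates the bounded form B after scaling.\<close>

lemma quad_form_dominated_on_cone:
  fixes A B :: "'v \<Rightarrow> 'v \<Rightarrow> real" and R :: "('v \<Rightarrow> real) set"
  assumes fin: "finite V" and "closed R"
    and cone: "\<And>r t. r \<in> R \<Longrightarrow> (\<lambda>i. t * r i) \<in> R"
    and pos: "\<And>r. r \<in> R \<Longrightarrow> \<forall>i. i \<notin> V \<longrightarrow> r i = 0 \<Longrightarrow> (\<Sum>i\<in>V. (r i)\<^sup>2) = 1 \<Longrightarrow>
      0 < quad_form V A r"
  obtains c where "c \<ge> 0"
    and "\<And>r. r \<in> R \<Longrightarrow> \<forall>i. i \<notin> V \<longrightarrow> r i = 0 \<Longrightarrow> 0 \<le> quad_form V B r + c * quad_form V A r"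
proof -
  define box where "box = {r::'v \<Rightarrow> real. \<forall>i. r i \<in> (if i \<in> V then {-1..1} else {0})}"
  define S where "S = box \<inter> R \<inter> {r. (\<Sum>i\<in>V. (r i)\<^sup>2) = 1}"
  have "compact box"
  proof -
    have "compactin (product_topology (\<lambda>i. euclidean) UNIV)
        (PiE UNIV (\<lambda>i. if i \<in> V then {-1..1::real} else {0}))"
      by (subst compactin_PiE) auto
    moreover have "box = PiE UNIV (\<lambda>i. if i \<in> V then {-1..1::real} else {0})"
      by (simp add: box_def PiE_UNIV_domain Pi_def)
    ultimately show ?thesis by (simp add: euclidean_product_topology)
  qed
  moreover have "closed {r::'v \<Rightarrow> real. (\<Sum>i\<in>V. (r i)\<^sup>2) = 1}"
    by (intro closed_Collect_eq continuous_intros continuous_on_product_coordinates)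
  ultimately have "compact S"
    unfolding S_def using \<open>closed R\<close> by (intro compact_Int_closed closed_Int)
  have S_bound: "\<bar>s i\<bar> \<le> 1" if "s \<in> S" "i \<in> V" for s i
    using that by (auto simp: S_def box_def abs_le_iff dest!: spec[of _ i])
  have S_supp: "\<forall>i. i \<notin> V \<longrightarrow> s i = 0" if "s \<in> S" for s
  proof (intro allI impI)
    fix i assume "i \<notin> V"
    with that show "s i = 0" by (auto simp: S_def box_def dest!: spec[of _ i])
  qed
  have homogeneous: "0 \<le> quad_form V B r + c * quad_form V A r"
    if on_S: "\<forall>s\<in>S. 0 \<le> quad_form V B s + c * quad_form V A s"
      and r: "r \<in> R" "\<forall>i. i \<notin> V \<longrightarrow> r i = 0" for r c
  proof (cases "(\<Sum>i\<in>V. (r i)\<^sup>2) = 0")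
    case True
    then have "quad_form V M r = quad_form V M (\<lambda>_. 0)" for M
      using sum_nonneg_eq_0_iff[OF fin, of "\<lambda>i. (r i)\<^sup>2"] by (intro quad_form_cong) auto
    then show ?thesis by (simp add: quad_form_def)
  next
    case False
    define n where "n = sqrt (\<Sum>i\<in>V. (r i)\<^sup>2)"
    have "n > 0"
      using False sum_nonneg[of V "\<lambda>i. (r i)\<^sup>2"] unfolding n_def by simp
    define s where "s = (\<lambda>i. (1 / n) * r i)"
    have r_eq: "r = (\<lambda>i. n * s i)" using \<open>n > 0\<close> by (simp add: s_def)
    have unit: "(\<Sum>i\<in>V. (s i)\<^sup>2) = 1"
      using \<open>n > 0\<close> False
      by (simp add: s_def n_def power_mult_distrib power_divide sum_divide_distrib[symmetric]
          flip: sum_distrib_left)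
    have bound: "\<bar>s i\<bar> \<le> 1" if "i \<in> V" for i
    proof -
      have "(s i)\<^sup>2 \<le> 1"
        using unit member_le_sum[OF that, of "\<lambda>i. (s i)\<^sup>2"] fin by simp
      then show ?thesis by (simp add: abs_square_le_1)
    qed
    have "s \<in> R" unfolding s_def by (rule cone[OF r(1)])
    moreover have "s \<in> box"
      unfolding box_def
    proof (intro CollectI allI)
      fix i
      show "s i \<in> (if i \<in> V then {-1..1} else {0})"
        using bound[of i] r(2) unfolding abs_le_iff by (cases "i \<in> V") (auto simp: s_def)
    qed
    ultimately have "s \<in> S" using unit by (simp add: S_def)
    then have "0 \<le> n\<^sup>2 * (quad_form V B s + c * quad_form V A s)" using on_S by simp
    then show ?thesis unfolding r_eq quad_form_scale by (simp add: algebra_simps)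
  qed
  show ?thesis
  proof (cases "S = {}")
    case True
    then show ?thesis using that[of 0] homogeneous[of 0] by auto
  next
    case False
    have "continuous_on S (quad_form V A)"
      unfolding quad_form_def
      by (intro continuous_intros continuous_on_subset[OF continuous_on_product_coordinates] subset_UNIV)
    then obtain s0 where s0: "s0 \<in> S" "\<And>s. s \<in> S \<Longrightarrow> quad_form V A s0 \<le> quad_form V A s"
      using continuous_attains_inf[OF \<open>compact S\<close> False] by blast
    define m where "m = quad_form V A s0"
    have "m > 0" unfolding m_def using s0(1) by (intro pos S_supp) (auto simp: S_def)
    define c where "c = (\<Sum>i\<in>V. \<Sum>j\<in>V. \<bar>B i j\<bar>) / m"
    have "c \<ge> 0" unfolding c_def using \<open>m > 0\<close> by (simp add: sum_nonneg)
    have "0 \<le> quad_form V B s + c * quad_form V A s" if "s \<in> S" for s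
    proof -
      have "\<bar>quad_form V B s\<bar> \<le> c * m"
        using abs_quad_form_le[OF S_bound[OF that]] \<open>m > 0\<close> by (simp add: c_def)
      moreover have "c * m \<le> c * quad_form V A s"
        using s0(2)[OF that] \<open>c \<ge> 0\<close> by (simp add: m_def mult_left_mono)
      ultimately show ?thesis by linarith
    qed
    then show ?thesis using that[of c] \<open>c \<ge> 0\<close> homogeneous by blast
  qed
qed

text \<open>Every stress on (V, p) vanishes on the affine functions, so both forms only see the
  residual of the projection onto them, and on residuals A is positive definite.\<close>

lemma stress_quad_form_dominated:
  fixes p :: "'v \<Rightarrow> 'a::euclidean_space"
  assumes fin: "finite V" and frame: "affine_frame p S" "S \<subseteq> V"
    and stA: "stress_matrix V EA p A" and psdA: "psd_on V A" and kerA: "kernel_on V A \<subseteq> affine_funs V p"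
    and stB: "stress_matrix V EB p B"
  obtains c where "c \<ge> 0" "\<And>x. 0 \<le> quad_form V B x + c * quad_form V A x"
proof -
  define R where "R = {r::'v \<Rightarrow> real. (\<Sum>i\<in>V. r i *\<^sub>R p i) = 0 \<and> (\<Sum>i\<in>V. r i) = 0}"
  have "closed R"
    unfolding R_def
    by (intro closed_Collect_conj closed_Collect_eq continuous_intros continuous_on_product_coordinates)
  moreover have "(\<lambda>i. t * r i) \<in> R" if "r \<in> R" for r t
    using that by (simp add: R_def flip: scaleR_scaleR scaleR_sum_right sum_distrib_left)
  moreover have "0 < quad_form V A r"
    if r: "r \<in> R" "\<forall>i. i \<notin> V \<longrightarrow> r i = 0" and unit: "(\<Sum>i\<in>V. (r i)\<^sup>2) = 1" for r
  proof -
    have "quad_form V A r \<noteq> 0"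
    proof
      assume "quad_form V A r = 0"
      then have "(\<lambda>i. if i \<in> V then r i else 0) \<in> kernel_on V A"
        using psd_quad_form_eq_0_imp_kernel[OF fin psdA stress_matrix_sym[OF stA]] by blast
      moreover have "(\<lambda>i. if i \<in> V then r i else 0) = r" using r(2) by auto
      ultimately have "r \<in> affine_funs V p" using kerA by auto
      then obtain a b where "r = affine_fun V p a b" by (auto simp: mem_affine_funs)
      then have "(\<Sum>i\<in>V. (r i)\<^sup>2) = (\<Sum>i\<in>V. r i * (a \<bullet> p i + b))"
        by (intro sum.cong) (simp_all add: affine_fun_def power2_eq_square)
      also have "\<dots> = a \<bullet> (\<Sum>i\<in>V. r i *\<^sub>R p i) + b * (\<Sum>i\<in>V. r i)"
        by (simp add: inner_sum_right sum_distrib_left sum.distrib algebra_simps)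
      also have "\<dots> = 0" using r(1) by (simp add: R_def)
      finally show False using unit by simp
    qed
    moreover have "0 \<le> quad_form V A r" using psdA by (simp add: psd_on_quad_form)
    ultimately show ?thesis by simp
  qed
  ultimately obtain c where c: "c \<ge> 0"
    "\<And>r. r \<in> R \<Longrightarrow> \<forall>i. i \<notin> V \<longrightarrow> r i = 0 \<Longrightarrow> 0 \<le> quad_form V B r + c * quad_form V A r"
    using quad_form_dominated_on_cone[OF fin] by blast
  show ?thesis
  proof (rule that[OF c(1)])
    fix x
    obtain a b where ab: "(\<Sum>i\<in>V. (x i - (a \<bullet> p i + b)) *\<^sub>R p i) = 0"
      "(\<Sum>i\<in>V. x i - (a \<bullet> p i + b)) = 0"
      using affine_residual_exists[OF fin frame] by blast
    define r where "r = (\<lambda>i. if i \<in> V then x i - (a \<bullet> p i + b) else 0)"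
    have "r \<in> R" using ab by (simp add: R_def r_def cong: sum.cong)
    moreover have "quad_form V M r = quad_form V M x" if "stress_matrix V E p M" for E M
    proof -
      have "quad_form V M r = quad_form V M (\<lambda>i. x i - (a \<bullet> p i + b))"
        by (rule quad_form_cong) (simp add: r_def)
      then show ?thesis using quad_form_diff_affine[OF that] by simp
    qed
    ultimately show "0 \<le> quad_form V B x + c * quad_form V A x"
      using c(2)[of r] stA stB by (simp add: r_def)
  qed
qed

section \<open>Infinitesimal motions and the rigidity matrix\<close>

definition inner_on :: "'v set \<Rightarrow> ('v \<Rightarrow> 'a::real_inner) \<Rightarrow> ('v \<Rightarrow> 'a) \<Rightarrow> real" where
  "inner_on V u w = (\<Sum>k\<in>V. u k \<bullet> w k)"

lemma subspace_inner_on_eq_0: "vfun.subspace {u. inner_on V u w = 0}"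
  by (auto simp: vfun.subspace_def inner_on_def inner_add_left sum.distrib
      simp flip: sum_distrib_left)

lemma inner_on_commute: "inner_on V u w = inner_on V w u"
  by (simp add: inner_on_def inner_commute)

lemma inner_on_span_eq_0:
  assumes "\<And>x. x \<in> X \<Longrightarrow> inner_on V x w = 0" "u \<in> vfun.span X"
  shows "inner_on V u w = 0"
  using vfun.span_minimal[OF _ subspace_inner_on_eq_0, of X V w] assms by blast

text \<open>Infinitesimal Euclidean motions of 'a, indexed by pairs m < n \<le> d with respect to an
  enumeration e of the basis: for n < d the rotation in the plane of e m and e n, for n = d
  the translation along e m.\<close>

definition inf_motion :: "(nat \<Rightarrow> 'a::euclidean_space) \<Rightarrow> nat \<times> nat \<Rightarrow> 'a \<Rightarrow> 'a" where
  "inf_motion e l x = (if snd l < DIM('a)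
     then (e (snd l) \<bullet> x) *\<^sub>R e (fst l) - (e (fst l) \<bullet> x) *\<^sub>R e (snd l) else e (fst l))"

definition motion_indices :: "nat \<Rightarrow> (nat \<times> nat) set" where
  "motion_indices d = {(m, n). m < n \<and> n \<le> d}"

lemma finite_motion_indices: "finite (motion_indices d)"
  by (rule finite_subset[of _ "{..d} \<times> {..d}"]) (auto simp: motion_indices_def)

lemma card_motion_indices: "card (motion_indices d) = (d + 1) choose 2"
proof (induction d)
  case 0
  have "motion_indices 0 = {}" by (auto simp: motion_indices_def)
  then show ?case by simp
next
  case (Suc d)
  have "motion_indices (Suc d) = motion_indices d \<union> (\<lambda>m. (m, Suc d)) ` {..d}"
    by (auto simp: motion_indices_def)
  moreover have "card ((\<lambda>m. (m, Suc d)) ` {..d}) = d + 1"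
    by (subst card_image) (auto simp: inj_on_def)
  moreover have "motion_indices d \<inter> (\<lambda>m. (m, Suc d)) ` {..d} = {}"
    by (auto simp: motion_indices_def)
  ultimately have "card (motion_indices (Suc d)) = card (motion_indices d) + (d + 1)"
    by (simp add: card_Un_disjoint finite_motion_indices)
  then show ?case using Suc by (simp add: numeral_2_eq_2)
qed

lemma inner_diff_inf_motion: "(x - y) \<bullet> (inf_motion e l x - inf_motion e l y) = 0"
  by (auto simp: inf_motion_def inner_diff_left inner_diff_right inner_commute algebra_simps)

definition motion_field :: "'v set \<Rightarrow> ('v \<Rightarrow> 'a::euclidean_space) \<Rightarrow> (nat \<Rightarrow> 'a) \<Rightarrow> nat \<times> nat \<Rightarrow> 'v \<Rightarrow> 'a" where
  "motion_field V p e l = (\<lambda>k. if k \<in> V then inf_motion e l (p k) else 0)"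

lemma inner_on_rigidity_row_motion_field:
  assumes "finite V" "i \<in> V" "j \<in> V"
  shows "inner_on V (rigidity_row p i j) (motion_field V p e l) = 0"
proof (cases "i = j")
  case False
  have "inner_on V (rigidity_row p i j) (motion_field V p e l)
      = (\<Sum>k\<in>V. (if k = i then (p i - p j) \<bullet> motion_field V p e l k else 0)
              + (if k = j then (p j - p i) \<bullet> motion_field V p e l k else 0))"
    unfolding inner_on_def rigidity_row_def by (intro sum.cong refl) (use False in auto)
  also have "\<dots> = (p i - p j) \<bullet> (inf_motion e l (p i) - inf_motion e l (p j))"
    using assms by (simp add: sum.distrib motion_field_def inner_diff_right inner_diff_left algebra_simps)
  finally show ?thesis by (simp add: inner_diff_inf_motion)
qed (simp add: inner_on_def rigidity_row_def if_distrib[of "\<lambda>u. u \<bullet> _"] cong: if_cong)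

lemma inner_enum_Basis:
  assumes "bij_betw e {..<DIM('a)} (Basis :: 'a::euclidean_space set)" "m < DIM('a)" "m' < DIM('a)"
  shows "e m \<bullet> e m' = (if m = m' then 1 else 0)"
proof -
  have "e m \<in> Basis" "e m' \<in> Basis" using assms by (auto dest: bij_betw_apply)
  moreover have "e m = e m' \<longleftrightarrow> m = m'"
    using assms unfolding bij_betw_def inj_on_def by auto
  ultimately show ?thesis using inner_Basis[of "e m" "e m'"] by auto
qed

text \<open>For every w, the inner product of w with the combination of motions is an affine
  function of x that vanishes on an affine frame, so its linear and constant parts vanish;
  taking basis vectors for w isolates each coefficient.\<close>

lemma inf_motion_coeffs_eq_0:
  fixes p :: "'v \<Rightarrow> 'a::euclidean_space"
  assumes e: "bij_betw e {..<DIM('a)} (Basis :: 'a set)" and frame: "affine_frame p S"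
    and z: "\<And>k. k \<in> S \<Longrightarrow> (\<Sum>l\<in>motion_indices DIM('a). \<alpha> l *\<^sub>R inf_motion e l (p k)) = 0"
    and l: "l \<in> motion_indices DIM('a)"
  shows "\<alpha> l = 0"
proof -
  let ?d = "DIM('a)" and ?I = "motion_indices DIM('a)"
  define C where "C = (\<lambda>w l. if snd l < ?d
    then (w \<bullet> e (fst l)) *\<^sub>R e (snd l) - (w \<bullet> e (snd l)) *\<^sub>R e (fst l) else 0)"
  define D where "D = (\<lambda>w l. if snd l < ?d then 0 else w \<bullet> e (fst l))"
  have CD: "w \<bullet> inf_motion e l x = C w l \<bullet> x + D w l" for w l x
    by (auto simp: inf_motion_def C_def D_def inner_diff_right inner_diff_left inner_commute)
  have key: "(\<Sum>l\<in>?I. \<alpha> l *\<^sub>R C w l) = 0 \<and> (\<Sum>l\<in>?I. \<alpha> l * D w l) = 0" for w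
  proof (rule affine_eq_0_on_frame[OF frame], intro ballI)
    fix k assume "k \<in> S"
    have "0 = w \<bullet> (\<Sum>l\<in>?I. \<alpha> l *\<^sub>R inf_motion e l (p k))" using z[OF \<open>k \<in> S\<close>] by simp
    also have "\<dots> = (\<Sum>l\<in>?I. \<alpha> l *\<^sub>R C w l) \<bullet> p k + (\<Sum>l\<in>?I. \<alpha> l * D w l)"
      by (simp add: inner_sum_right inner_sum_left CD distrib_left sum.distrib)
    finally show "(\<Sum>l\<in>?I. \<alpha> l *\<^sub>R C w l) \<bullet> p k + (\<Sum>l\<in>?I. \<alpha> l * D w l) = 0" by simp
  qed
  obtain m n where lmn: "l = (m, n)" "m < n" "n \<le> ?d" using l by (auto simp: motion_indices_def)
  have eo: "\<And>m m'. m < ?d \<Longrightarrow> m' < ?d \<Longrightarrow> e m \<bullet> e m' = (if m = m' then 1 else 0)"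
    by (rule inner_enum_Basis[OF e])
  have pick: "(\<Sum>l'\<in>?I. if l' = l then \<alpha> l' else 0) = \<alpha> l"
    using l finite_motion_indices by simp
  show ?thesis
  proof (cases "n < ?d")
    case True
    have "(\<Sum>l'\<in>?I. \<alpha> l' *\<^sub>R C (e m) l') \<bullet> e n = (\<Sum>l'\<in>?I. if l' = l then \<alpha> l' else 0)"
      unfolding inner_sum_left
    proof (intro sum.cong refl)
      fix l' assume "l' \<in> ?I"
      then obtain m' n' where l'mn: "l' = (m', n')" "m' < n'" "n' \<le> ?d"
        by (auto simp: motion_indices_def)
      show "(\<alpha> l' *\<^sub>R C (e m) l') \<bullet> e n = (if l' = l then \<alpha> l' else 0)"
        using True lmn l'mn eo by (auto simp: C_def inner_diff_left)
    qed
    then show ?thesis using key[of "e m"] pick by simp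
  next
    case False
    have "(\<Sum>l'\<in>?I. \<alpha> l' * D (e m) l') = (\<Sum>l'\<in>?I. if l' = l then \<alpha> l' else 0)"
    proof (intro sum.cong refl)
      fix l' assume "l' \<in> ?I"
      then obtain m' n' where l'mn: "l' = (m', n')" "m' < n'" "n' \<le> ?d"
        by (auto simp: motion_indices_def)
      show "\<alpha> l' * D (e m) l' = (if l' = l then \<alpha> l' else 0)"
        using False lmn l'mn eo[of m m'] by (auto simp: D_def)
    qed
    then show ?thesis using key[of "e m"] pick by simp
  qed
qed

lemma vfun_independent_image:
  fixes g :: "'i \<Rightarrow> 'v \<Rightarrow> 'a::real_vector"
  assumes fin: "finite I"
    and coeffs: "\<And>\<alpha>. (\<Sum>l\<in>I. (\<lambda>k. \<alpha> l *\<^sub>R g l k)) = 0 \<Longrightarrow> \<forall>l\<in>I. \<alpha> l = 0"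
  shows "inj_on g I" "vfun.independent (g ` I)"
proof -
  show inj: "inj_on g I"
  proof (rule inj_onI, rule ccontr)
    fix i j assume ij: "i \<in> I" "j \<in> I" "g i = g j" "i \<noteq> j"
    define \<alpha> where "\<alpha> = (\<lambda>l. (if l = i then 1 else 0) - (if l = j then 1 else (0::real)))"
    have "(\<Sum>l\<in>I. (\<lambda>k. \<alpha> l *\<^sub>R g l k)) = 0"
    proof
      fix k
      have "(\<Sum>l\<in>I. (\<lambda>k. \<alpha> l *\<^sub>R g l k)) k
          = (\<Sum>l\<in>I. (if l = i then g l k else 0)) - (\<Sum>l\<in>I. (if l = j then g l k else 0))"
        unfolding sum_fun_apply sum_subtractf[symmetric] by (intro sum.cong refl) (auto simp: \<alpha>_def)
      then show "(\<Sum>l\<in>I. (\<lambda>k. \<alpha> l *\<^sub>R g l k)) k = 0 k" using ij fin by simp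
    qed
    with coeffs ij(1) have "\<alpha> i = 0" by blast
    then show False using ij(4) by (simp add: \<alpha>_def)
  qed
  show "vfun.independent (g ` I)"
  proof (rule vfun.independent_if_scalars_zero)
    fix f x assume s: "(\<Sum>x\<in>g ` I. (\<lambda>k. f x *\<^sub>R x k)) = 0" and x: "x \<in> g ` I"
    have "\<forall>l\<in>I. (f \<circ> g) l = 0"
      using s unfolding sum.reindex[OF inj] by (intro coeffs) (simp add: comp_def)
    then show "f x = 0" using x by auto
  qed (use fin in simp)
qed

lemma motion_fields_independent:
  fixes p :: "'v \<Rightarrow> 'a::euclidean_space"
  assumes e: "bij_betw e {..<DIM('a)} (Basis :: 'a set)" and frame: "affine_frame p S" "S \<subseteq> V"
  shows "inj_on (motion_field V p e) (motion_indices DIM('a))"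
    and "vfun.independent (motion_field V p e ` motion_indices DIM('a))"
proof -
  have "\<forall>l\<in>motion_indices DIM('a). \<alpha> l = 0"
    if z: "(\<Sum>l\<in>motion_indices DIM('a). (\<lambda>k. \<alpha> l *\<^sub>R motion_field V p e l k)) = 0" for \<alpha>
  proof
    fix l assume "l \<in> motion_indices DIM('a)"
    moreover have "(\<Sum>l\<in>motion_indices DIM('a). \<alpha> l *\<^sub>R inf_motion e l (p k)) = 0" if "k \<in> S" for k
      using fun_cong[OF z, of k] that frame(2) by (auto simp: sum_fun_apply motion_field_def)
    ultimately show "\<alpha> l = 0" by (rule inf_motion_coeffs_eq_0[OF e frame(1), rotated])
  qed
  then show "inj_on (motion_field V p e) (motion_indices DIM('a))"
    "vfun.independent (motion_field V p e ` motion_indices DIM('a))"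
    using vfun_independent_image[OF finite_motion_indices] by blast+
qed

lemma subspace_supported_on: "vfun.subspace {u. \<forall>k. k \<notin> V \<longrightarrow> u k = 0}"
  by (auto simp: vfun.subspace_def)

lemma vfun_independent_Un_orthogonal:
  fixes X Y :: "('v \<Rightarrow> 'a::real_inner) set"
  assumes fin: "finite V"
    and iX: "vfun.independent X" and iY: "vfun.independent Y" and fX: "finite X" and fY: "finite Y"
    and supp: "\<And>u k. u \<in> X \<Longrightarrow> k \<notin> V \<Longrightarrow> u k = 0"
    and orth: "\<And>x y. x \<in> X \<Longrightarrow> y \<in> Y \<Longrightarrow> inner_on V x y = 0"
  shows "vfun.independent (X \<union> Y)" "X \<inter> Y = {}"
proof -
  have disj: "w = 0" if wX: "w \<in> vfun.span X" and wY: "w \<in> vfun.span Y" for w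
  proof
    fix k
    have "inner_on V w y = 0" if "y \<in> Y" for y
      using orth that by (intro inner_on_span_eq_0[OF _ wX]) blast
    then have "inner_on V w w = 0"
      using inner_on_span_eq_0[OF _ wY, of V w] by (simp add: inner_on_commute)
    then have "\<forall>k\<in>V. w k \<bullet> w k = 0"
      unfolding inner_on_def using sum_nonneg_eq_0_iff[OF fin, of "\<lambda>k. w k \<bullet> w k"] by simp
    moreover have "w \<in> {u. \<forall>k. k \<notin> V \<longrightarrow> u k = 0}"
      using vfun.span_minimal[OF _ subspace_supported_on] supp wX by blast
    ultimately show "w k = 0 k" by (cases "k \<in> V") auto
  qed
  show XY: "X \<inter> Y = {}"
  proof (rule ccontr)
    assume "X \<inter> Y \<noteq> {}"
    then obtain x where "x \<in> X" "x \<in> Y" by blast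
    then have "x = 0" using disj vfun.span_base by blast
    with \<open>x \<in> X\<close> iX show False using vfun.dependent_zero by blast
  qed
  show "vfun.independent (X \<union> Y)"
  proof (rule vfun.independent_if_scalars_zero)
    fix f x assume s: "(\<Sum>x\<in>X \<union> Y. (\<lambda>k. f x *\<^sub>R x k)) = 0" and x: "x \<in> X \<union> Y"
    define sX where "sX = (\<Sum>x\<in>X. (\<lambda>k. f x *\<^sub>R x k))"
    define sY where "sY = (\<Sum>x\<in>Y. (\<lambda>k. f x *\<^sub>R x k))"
    have "sX = - sY"
      using s unfolding sX_def sY_def sum.union_disjoint[OF fX fY XY] by (simp add: eq_neg_iff_add_eq_0)
    moreover have "sX \<in> vfun.span X" "sY \<in> vfun.span Y"
      unfolding sX_def sY_def by (intro vfun.span_sum vfun.span_scale vfun.span_base; assumption)+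
    ultimately have "sX = 0" "sY = 0" using disj vfun.span_neg by force+
    then have "\<forall>v\<in>X. f v = 0" "\<forall>v\<in>Y. f v = 0"
      using iX iY vfun.dependent_finite[OF fX] vfun.dependent_finite[OF fY]
      unfolding sX_def sY_def by blast+
    then show "f x = 0" using x by blast
  qed (use fX fY in simp)
qed

lemma card_independent_supported_le:
  fixes X :: "('v \<Rightarrow> 'a::euclidean_space) set"
  assumes fin: "finite V" and "vfun.independent X" and supp: "\<And>u k. u \<in> X \<Longrightarrow> k \<notin> V \<Longrightarrow> u k = 0"
  shows "card X \<le> card V * DIM('a)"
proof -
  define T where "T = (\<lambda>(k, w). (\<lambda>k'. if k' = k then w else (0::'a))) ` (V \<times> Basis)"
  have "u \<in> vfun.span T" if "u \<in> X" for u
  proof -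
    have "u = (\<Sum>kw\<in>V \<times> Basis. (\<lambda>k'. (u (fst kw) \<bullet> snd kw) *\<^sub>R (if k' = fst kw then snd kw else 0)))"
    proof
      fix k'
      have "(\<Sum>kw\<in>V \<times> Basis. (\<lambda>k'. (u (fst kw) \<bullet> snd kw) *\<^sub>R (if k' = fst kw then snd kw else 0))) k'
          = (\<Sum>k\<in>V. \<Sum>w\<in>Basis. (u k \<bullet> w) *\<^sub>R (if k' = k then w else 0))"
        unfolding sum_fun_apply by (subst sum.cartesian_product) (simp add: case_prod_beta)
      also have "\<dots> = (\<Sum>k\<in>V. if k' = k then (\<Sum>w\<in>Basis. (u k \<bullet> w) *\<^sub>R w) else 0)"
        by (intro sum.cong refl) auto
      also have "\<dots> = u k'"
        using fin supp[OF that, of k'] by (simp add: euclidean_representation)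
      finally show "u k' = (\<Sum>kw\<in>V \<times> Basis.
          (\<lambda>k'. (u (fst kw) \<bullet> snd kw) *\<^sub>R (if k' = fst kw then snd kw else 0))) k'" by simp
    qed
    also have "\<dots> \<in> vfun.span T"
      by (intro vfun.span_sum vfun.span_scale vfun.span_base) (force simp: T_def)
    finally show ?thesis .
  qed
  moreover have "finite T" using fin by (simp add: T_def)
  ultimately have "card X \<le> card T"
    using vfun.independent_span_bound[OF _ assms(2)] by blast
  also have "\<dots> \<le> card V * DIM('a)"
    unfolding T_def by (rule order_trans[OF card_image_le]) (simp_all add: card_cartesian_product fin)
  finally show ?thesis .
qed

definition rigidity_rows :: "'v set set \<Rightarrow> ('v \<Rightarrow> 'a::euclidean_space) \<Rightarrow> ('v \<Rightarrow> 'a) set" where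
  "rigidity_rows E p = {rigidity_row p i j | i j. {i, j} \<in> E}"

lemma finite_rigidity_rows:
  assumes "graph_on V E" shows "finite (rigidity_rows E p)"
proof (rule finite_subset)
  show "rigidity_rows E p \<subseteq> (\<lambda>(i, j). rigidity_row p i j) ` (V \<times> V)"
    using assms by (force simp: rigidity_rows_def graph_on_def)
qed (use assms in \<open>simp add: graph_on_def\<close>)

text \<open>The rows of the rigidity matrix are orthogonal to the (d+1 choose 2) independent motion
  fields; hence infinitesimal rigidity leaves no room for a further independent row.\<close>

lemma rigidity_row_in_span:
  fixes p :: "'v \<Rightarrow> 'a::euclidean_space"
  assumes gr: "graph_on V E" and frame: "affine_frame p S" "S \<subseteq> V"
    and rig: "inf_rigid V E p" and ij: "i0 \<in> V" "j0 \<in> V"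
  shows "rigidity_row p i0 j0 \<in> vfun.span (rigidity_rows E p)"
proof (rule ccontr)
  let ?d = "DIM('a)" and ?R = "rigidity_rows E p" and ?row0 = "rigidity_row p i0 j0"
  assume nin: "?row0 \<notin> vfun.span ?R"
  have fin: "finite V" using gr by (simp add: graph_on_def)
  have row_supp: "rigidity_row p i j k = 0" if "i \<in> V" "j \<in> V" "k \<notin> V" for i j k
    using that by (auto simp: rigidity_row_def)
  have row_orth: "inner_on V (rigidity_row p i j) (motion_field V p e l) = 0"
    if "i \<in> V" "j \<in> V" for i j e l
    using inner_on_rigidity_row_motion_field[OF fin that] .
  obtain B where B: "B \<subseteq> ?R" "vfun.independent B" "?R \<subseteq> vfun.span B" "card B = vfun.dim ?R"
    using vfun.basis_exists by blast
  have finB: "finite B" using finite_rigidity_rows[OF gr] B(1) by (rule finite_subset[rotated])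
  have "?row0 \<notin> vfun.span B" using nin vfun.span_mono[OF B(1)] by blast
  then have iX: "vfun.independent (insert ?row0 B)" and "?row0 \<notin> B"
    using B(2) vfun.independent_insertI vfun.span_base by auto
  then have cX: "card (insert ?row0 B) = card B + 1" using finB by simp
  have X_rows: "\<exists>i j. i \<in> V \<and> j \<in> V \<and> x = rigidity_row p i j" if x: "x \<in> insert ?row0 B" for x
  proof (cases "x = ?row0")
    case False
    then obtain i j where "{i, j} \<in> E" "x = rigidity_row p i j"
      using x B(1) by (auto simp: rigidity_rows_def)
    moreover from \<open>{i, j} \<in> E\<close> gr have "i \<in> V" "j \<in> V" by (auto simp: graph_on_def)
    ultimately show ?thesis by blast
  qed (use ij in blast)
  obtain e where e: "bij_betw e {..<?d} (Basis :: 'a set)"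
    using ex_bij_betw_nat_finite[of "Basis :: 'a set"] by (auto simp: atLeast0LessThan)
  let ?Y = "motion_field V p e ` motion_indices ?d"
  have cY: "card ?Y = (?d + 1) choose 2"
    using card_image[OF motion_fields_independent(1)[OF e frame]] by (simp add: card_motion_indices)
  have suppX: "u k = 0" if "u \<in> insert ?row0 B" "k \<notin> V" for u k
    using X_rows[OF that(1)] row_supp that(2) by blast
  have orth: "inner_on V x y = 0" if "x \<in> insert ?row0 B" "y \<in> ?Y" for x y
    using X_rows[OF that(1)] that(2) row_orth by blast
  have finX: "finite (insert ?row0 B)" using finB by simp
  have finY: "finite ?Y" by (simp add: finite_motion_indices)
  have iXY: "vfun.independent (insert ?row0 B \<union> ?Y)" and disj: "insert ?row0 B \<inter> ?Y = {}"
    by (rule vfun_independent_Un_orthogonal[OF fin iX motion_fields_independent(2)[OF e frame]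
          finX finY]; use suppX orth in blast)+
  have "u k = 0" if "u \<in> insert ?row0 B \<union> ?Y" "k \<notin> V" for u k
    using that suppX by (auto simp: motion_field_def)
  then have "card (insert ?row0 B \<union> ?Y) \<le> card V * ?d"
    by (rule card_independent_supported_le[OF fin iXY])
  then have "card (insert ?row0 B) + card ?Y \<le> card V * ?d"
    using card_Un_disjoint[OF finX finY disj] by simp
  moreover have "card B = card V * ?d - (?d + 1 choose 2)"
    using B(4) rig by (simp add: inf_rigid_def rigidity_rank_def rigidity_rows_def)
  moreover have "(?d + 1) choose 2 \<le> card V * ?d"
  proof -
    have "?d + 1 \<le> card V"
      using card_mono[OF fin frame(2)] frame(1) by (simp add: affine_frame_def)
    then have "(?d + 1) * ?d \<le> card V * ?d" by (rule mult_right_mono) simp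
    then show ?thesis by (simp add: choose_two)
  qed
  ultimately show False using cX cY by linarith
qed

section \<open>Stresses from self-stresses\<close>

lemma vfun_span_image_sum:
  fixes f :: "'i \<Rightarrow> 'v \<Rightarrow> 'a::real_vector"
  assumes "finite P" "x \<in> vfun.span (f ` P)"
  obtains c where "x = (\<Sum>a\<in>P. (\<lambda>k. c a *\<^sub>R f a k))"
proof -
  from assms(2) have "\<exists>c. x = (\<Sum>a\<in>P. (\<lambda>k. c a *\<^sub>R f a k))"
  proof (induction rule: vfun.span_induct_alt)
    case base
    show ?case by (intro exI[of _ "\<lambda>_. 0"]) (simp add: fun_eq_iff sum_fun_apply)
  next
    case (step t u y)
    obtain a0 where "a0 \<in> P" "u = f a0" using step.hyps(1) by blast
    obtain c where c: "y = (\<Sum>a\<in>P. (\<lambda>k. c a *\<^sub>R f a k))" using step.IH by blast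
    have "(\<lambda>k. t *\<^sub>R u k) + y = (\<Sum>a\<in>P. (\<lambda>k. (c a + (if a = a0 then t else 0)) *\<^sub>R f a k))"
      using \<open>a0 \<in> P\<close> assms(1)
      by (simp add: c \<open>u = f a0\<close> fun_eq_iff sum_fun_apply scaleR_add_left sum.distrib
          if_distrib[of "\<lambda>r. r *\<^sub>R _"] cong: if_cong)
    then show ?case by (rule exI[where x = "\<lambda>a. c a + (if a = a0 then t else 0)"])
  qed
  then show ?thesis using that by blast
qed

lemma stress_matrix_zero: "stress_matrix V E p (\<lambda>_ _. 0)"
  by (simp add: stress_matrix_def)

lemma stress_matrix_add:
  assumes "stress_matrix V E p M" "stress_matrix V E p N"
  shows "stress_matrix V E p (\<lambda>i j. M i j + N i j)"
  using assms by (simp add: stress_matrix_def sum.distrib scaleR_add_left)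

lemma stress_matrix_scale:
  assumes "stress_matrix V E p M"
  shows "stress_matrix V E p (\<lambda>i j. c * M i j)"
  using assms
  by (simp add: stress_matrix_def flip: sum_distrib_left scaleR_scaleR scaleR_sum_right)

lemma stress_matrix_sum:
  assumes "finite P" "\<And>x. x \<in> P \<Longrightarrow> stress_matrix V E p (M x)"
  shows "stress_matrix V E p (\<lambda>i j. \<Sum>x\<in>P. c x * M x i j)"
  using assms by (induction P rule: finite_induct)
    (simp_all add: stress_matrix_zero stress_matrix_add stress_matrix_scale)

lemma stress_matrix_mono: "stress_matrix V E p M \<Longrightarrow> E \<subseteq> E' \<Longrightarrow> stress_matrix V E' p M"
  unfolding stress_matrix_def by (metis in_mono)

lemma stress_matrix_Diff:
  assumes "stress_matrix V E p M"
    and "\<And>i j. i \<in> V \<Longrightarrow> j \<in> V \<Longrightarrow> i \<noteq> j \<Longrightarrow> {i, j} \<in> F \<Longrightarrow> M i j = 0"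
  shows "stress_matrix V (E - F) p M"
  using assms unfolding stress_matrix_def by (metis DiffI)

definition edge_matrix :: "'v \<Rightarrow> 'v \<Rightarrow> 'v \<Rightarrow> 'v \<Rightarrow> real" where
  "edge_matrix i j k l =
     ((if k = i then 1 else 0) - (if k = j then 1 else 0)) * ((if l = i then 1 else 0) - (if l = j then 1 else 0))"

lemma edge_matrix_commute: "edge_matrix i j k l = edge_matrix i j l k"
  by (simp add: edge_matrix_def)

lemma edge_matrix_eq_0: "k \<noteq> l \<Longrightarrow> {k, l} \<noteq> {i, j} \<Longrightarrow> edge_matrix i j k l = 0"
  by (auto simp: edge_matrix_def)

lemma edge_matrix_off_diag: "i \<noteq> j \<Longrightarrow> edge_matrix i j i j = -1"
  by (simp add: edge_matrix_def)

lemma edge_matrix_row: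
  fixes q :: "'v \<Rightarrow> 'a::real_vector"
  assumes "finite V" "i \<in> V" "j \<in> V"
  shows "(\<Sum>l\<in>V. edge_matrix i j k l *\<^sub>R q l)
    = ((if k = i then 1 else 0) - (if k = j then 1 else 0)) *\<^sub>R (q i - q j)"
  using assms
  by (simp add: edge_matrix_def algebra_simps sum.distrib sum_subtractf scaleR_diff_right
      if_distrib[of "\<lambda>r. r *\<^sub>R _"] cong: if_cong)

lemma edge_matrix_row_sum: "finite V \<Longrightarrow> i \<in> V \<Longrightarrow> j \<in> V \<Longrightarrow> (\<Sum>l\<in>V. edge_matrix i j k l) = 0"
  using edge_matrix_row[of V i j k "\<lambda>_. 1 :: real"] by simp

lemma edge_matrix_load:
  "finite V \<Longrightarrow> i \<in> V \<Longrightarrow> j \<in> V \<Longrightarrow> (\<Sum>l\<in>V. edge_matrix i j k l *\<^sub>R p l) = rigidity_row p i j k"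
  by (simp add: edge_matrix_row rigidity_row_def)

lemma stress_matrix_of_self_stress:
  fixes p :: "'v \<Rightarrow> 'a::euclidean_space"
  assumes fin: "finite V" "finite P"
    and P: "\<And>x. x \<in> P \<Longrightarrow> fst x \<in> V \<and> snd x \<in> V \<and> {fst x, snd x} \<in> E"
    and balance: "\<And>k. (\<Sum>x\<in>P. w x *\<^sub>R rigidity_row p (fst x) (snd x) k) = 0"
  shows "stress_matrix V E p (\<lambda>k l. \<Sum>x\<in>P. w x * edge_matrix (fst x) (snd x) k l)"
  unfolding stress_matrix_def
proof (intro conjI ballI impI)
  fix k l
  show "(\<Sum>x\<in>P. w x * edge_matrix (fst x) (snd x) k l) = (\<Sum>x\<in>P. w x * edge_matrix (fst x) (snd x) l k)"
    by (simp add: edge_matrix_commute[of _ _ k l])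
  assume "k \<noteq> l \<and> {k, l} \<notin> E"
  then show "(\<Sum>x\<in>P. w x * edge_matrix (fst x) (snd x) k l) = 0"
    using P by (intro sum.neutral ballI) (metis edge_matrix_eq_0 mult_zero_right)
next
  fix k
  show "(\<Sum>l\<in>V. \<Sum>x\<in>P. w x * edge_matrix (fst x) (snd x) k l) = 0"
    using P fin
    by (subst sum.swap) (simp add: edge_matrix_row_sum flip: sum_distrib_left)
  have "(\<Sum>l\<in>V. (\<Sum>x\<in>P. w x * edge_matrix (fst x) (snd x) k l) *\<^sub>R p l)
      = (\<Sum>x\<in>P. w x *\<^sub>R (\<Sum>l\<in>V. edge_matrix (fst x) (snd x) k l *\<^sub>R p l))"
    by (simp add: scaleR_sum_left scaleR_sum_right sum.swap[of _ V P])
  also have "\<dots> = 0"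
    using P fin balance[of k] by (simp add: edge_matrix_load)
  finally show "(\<Sum>l\<in>V. (\<Sum>x\<in>P. w x * edge_matrix (fst x) (snd x) k l) *\<^sub>R p l) = 0" .
qed

text \<open>Writing the row of the missing edge as a combination of the rows of E yields a
  self-stress of the graph with that edge added, with weight 1 on it.\<close>

lemma stress_with_added_edge:
  fixes p :: "'v \<Rightarrow> 'a::euclidean_space"
  assumes gr: "graph_on V E" and frame: "affine_frame p S" "S \<subseteq> V" and rig: "inf_rigid V E p"
    and ij: "i0 \<in> V" "j0 \<in> V" "i0 \<noteq> j0" "{i0, j0} \<notin> E"
  obtains D where "stress_matrix V (insert {i0, j0} E) p D" and "D i0 j0 = -1"
proof -
  define P where "P = {x. {fst x, snd x} \<in> E}"
  have P_V: "fst x \<in> V \<and> snd x \<in> V" if "x \<in> P" for x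
    using that gr by (auto simp: P_def graph_on_def)
  have finV: "finite V" using gr by (simp add: graph_on_def)
  have finP: "finite P"
    using P_V by (intro finite_subset[OF _ finite_cartesian_product[OF finV finV]]) auto
  have "rigidity_rows E p = (\<lambda>x. rigidity_row p (fst x) (snd x)) ` P"
  proof (intro equalityI subsetI)
    fix r assume "r \<in> rigidity_rows E p"
    then obtain i j where "{i, j} \<in> E" "r = rigidity_row p i j" by (auto simp: rigidity_rows_def)
    then show "r \<in> (\<lambda>x. rigidity_row p (fst x) (snd x)) ` P"
      by (intro image_eqI[of _ _ "(i, j)"]) (simp_all add: P_def)
  qed (auto simp: rigidity_rows_def P_def)
  then have "rigidity_row p i0 j0 \<in> vfun.span ((\<lambda>x. rigidity_row p (fst x) (snd x)) ` P)"
    using rigidity_row_in_span[OF gr frame rig ij(1,2)] by simp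
  then obtain c where c: "rigidity_row p i0 j0 = (\<Sum>x\<in>P. (\<lambda>k. c x *\<^sub>R rigidity_row p (fst x) (snd x) k))"
    by (rule vfun_span_image_sum[OF finP])
  have "(i0, j0) \<notin> P" using ij(4) by (simp add: P_def)
  define w where "w = (\<lambda>x. if x = (i0, j0) then 1 else - c x)"
  define D where "D = (\<lambda>k l. \<Sum>x\<in>insert (i0, j0) P. w x * edge_matrix (fst x) (snd x) k l)"
  have "stress_matrix V (insert {i0, j0} E) p D"
    unfolding D_def
  proof (rule stress_matrix_of_self_stress)
    fix k
    have "(\<Sum>x\<in>P. w x *\<^sub>R rigidity_row p (fst x) (snd x) k) = - rigidity_row p i0 j0 k"
      using \<open>(i0, j0) \<notin> P\<close> by (auto simp: c w_def sum_fun_apply sum_negf[symmetric] intro!: sum.cong)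
    then show "(\<Sum>x\<in>insert (i0, j0) P. w x *\<^sub>R rigidity_row p (fst x) (snd x) k) = 0"
      using finP \<open>(i0, j0) \<notin> P\<close> by (simp add: w_def)
  qed (use finV finP ij P_V in \<open>auto simp: P_def\<close>)
  moreover have "D i0 j0 = -1"
  proof -
    have "edge_matrix (fst x) (snd x) i0 j0 = 0" if "x \<in> P" for x
      using that ij(3,4) by (intro edge_matrix_eq_0) (auto simp: P_def)
    then show ?thesis
      using finP \<open>(i0, j0) \<notin> P\<close> ij(3) by (simp add: D_def w_def edge_matrix_off_diag)
  qed
  ultimately show ?thesis by (rule that)
qed

lemma stress_with_prescribed_entries:
  fixes p :: "'v \<Rightarrow> 'a::euclidean_space"
  assumes gr: "graph_on V E" and frame: "affine_frame p S" "S \<subseteq> V" and rig: "inf_rigid V E p"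
    and F: "\<And>e. e \<in> F \<Longrightarrow> e \<subseteq> V \<and> card e = 2 \<and> e \<notin> E"
    and sym: "\<And>i j. {i, j} \<in> F \<Longrightarrow> w i j = w j i"
  obtains M where "stress_matrix V (E \<union> F) p M" and "\<And>i j. {i, j} \<in> F \<Longrightarrow> M i j = w i j"
proof -
  have F_pair: "i \<in> V \<and> j \<in> V \<and> i \<noteq> j \<and> {i, j} \<notin> E" if "{i, j} \<in> F" for i j
    using F[OF that] by (cases "i = j") auto
  define P where "P = {x. {fst x, snd x} \<in> F}"
  have finP: "finite P"
    using gr F_pair by (intro finite_subset[of P "V \<times> V"]) (auto simp: P_def graph_on_def)
  have "\<forall>x\<in>P. \<exists>D. stress_matrix V (insert {fst x, snd x} E) p D \<and> D (fst x) (snd x) = -1"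
  proof
    fix x assume "x \<in> P"
    then have "fst x \<in> V" "snd x \<in> V" "fst x \<noteq> snd x" "{fst x, snd x} \<notin> E"
      using F_pair by (auto simp: P_def)
    from stress_with_added_edge[OF gr frame rig this] show "\<exists>D. stress_matrix V
        (insert {fst x, snd x} E) p D \<and> D (fst x) (snd x) = -1" by blast
  qed
  then obtain D where D: "\<And>x. x \<in> P \<Longrightarrow> stress_matrix V (insert {fst x, snd x} E) p (D x)"
    "\<And>x. x \<in> P \<Longrightarrow> D x (fst x) (snd x) = -1"
    by (metis bchoice)
  define M where "M = (\<lambda>k l. \<Sum>x\<in>P. (- w (fst x) (snd x) / 2) * D x k l)"
  have "stress_matrix V (E \<union> F) p M"
    unfolding M_def
    by (rule stress_matrix_sum[OF finP], rule stress_matrix_mono[OF D(1)]) (auto simp: P_def)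
  moreover have "M a b = w a b" if ab: "{a, b} \<in> F" for a b
  proof -
    have ab': "a \<in> V" "b \<in> V" "a \<noteq> b" "{a, b} \<notin> E" using F_pair[OF ab] by auto
    have "(a, b) \<in> P" "(b, a) \<in> P" using ab by (auto simp: P_def insert_commute)
    have "D x a b = 0" if "x \<in> P - {(a, b), (b, a)}" for x
    proof (rule stress_matrix_non_edge[OF D(1)])
      show "{a, b} \<notin> insert {fst x, snd x} E"
        using that ab'(4) by (cases x) (auto simp: doubleton_eq_iff)
    qed (use that ab' in auto)
    then have "M a b = (\<Sum>x\<in>{(a, b), (b, a)}. (- w (fst x) (snd x) / 2) * D x a b)"
      unfolding M_def using \<open>(a, b) \<in> P\<close> \<open>(b, a) \<in> P\<close>
      by (intro sum.mono_neutral_right[OF finP]) auto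
    also have "\<dots> = w a b"
      using D(2)[OF \<open>(a, b) \<in> P\<close>] D(2)[OF \<open>(b, a) \<in> P\<close>] sym[OF ab] ab'
        stress_matrix_sym[OF D(1)[OF \<open>(b, a) \<in> P\<close>], of a b]
      by simp
    finally show ?thesis .
  qed
  ultimately show ?thesis by (rule that)
qed

section \<open>Gluing along the common vertices\<close>

lemma sum_ext0:
  fixes q :: "'v \<Rightarrow> 'a::real_vector"
  assumes "finite V" "W \<subseteq> V"
  shows "(\<Sum>l\<in>V. ext0 W M k l *\<^sub>R q l) = (if k \<in> W then (\<Sum>l\<in>W. M k l *\<^sub>R q l) else 0)"
proof -
  have "(\<Sum>l\<in>V. ext0 W M k l *\<^sub>R q l) = (\<Sum>l\<in>V \<inter> W. if k \<in> W then M k l *\<^sub>R q l else 0)"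
    unfolding sum.inter_restrict[OF assms(1)] by (intro sum.cong) (auto simp: ext0_def)
  also have "V \<inter> W = W" using assms(2) by blast
  finally show ?thesis by simp
qed

lemma stress_matrix_ext0:
  assumes fin: "finite V" and WV: "W \<subseteq> V" and st: "stress_matrix W E q M"
    and pq: "\<And>i. i \<in> W \<Longrightarrow> p i = q i"
  shows "stress_matrix V E p (ext0 W M)"
  unfolding stress_matrix_def
proof (intro conjI ballI impI)
  fix i j assume "i \<in> V" "j \<in> V"
  show "ext0 W M i j = ext0 W M j i" using stress_matrix_sym[OF st] by (auto simp: ext0_def)
  assume "i \<noteq> j \<and> {i, j} \<notin> E"
  then show "ext0 W M i j = 0" using stress_matrix_non_edge[OF st] by (auto simp: ext0_def)
next
  fix i assume "i \<in> V"
  show "(\<Sum>j\<in>V. ext0 W M i j) = 0"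
    using sum_ext0[OF fin WV, of M i "\<lambda>_. 1 :: real"] stress_matrix_row_sum[OF st] by simp
  have "(\<Sum>j\<in>W. M i j *\<^sub>R p j) = (\<Sum>j\<in>W. M i j *\<^sub>R q j)" by (simp add: pq)
  then show "(\<Sum>j\<in>V. ext0 W M i j *\<^sub>R p j) = 0"
    using sum_ext0[OF fin WV, of M i p] stress_matrix_equilibrium[OF st] by simp
qed

lemma quad_form_ext0:
  assumes "finite V" "W \<subseteq> V"
  shows "quad_form V (ext0 W M) x = quad_form W M x"
proof -
  have row: "(\<Sum>l\<in>V. ext0 W M k l * x l) = (if k \<in> W then (\<Sum>l\<in>W. M k l * x l) else 0)" for k
    using sum_ext0[OF assms, of M k x] by simp
  have "quad_form V (ext0 W M) x = (\<Sum>i\<in>V \<inter> W. x i * (\<Sum>j\<in>W. M i j * x j))"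
    unfolding quad_form_eq_sum_rows row sum.inter_restrict[OF assms(1)] by (intro sum.cong) auto
  also have "V \<inter> W = W" using assms(2) by blast
  finally show ?thesis by (simp add: quad_form_eq_sum_rows)
qed

lemma stress_matrix_attachment:
  assumes fin: "finite VA" "finite VB"
    and stA: "stress_matrix VA EA pA A" and stK: "stress_matrix VA (EA \<union> F) pA K"
    and stB: "stress_matrix VB EB pB B"
    and F: "F \<subseteq> EB" "\<And>i j. {i, j} \<in> F \<Longrightarrow> i \<in> VA \<inter> VB \<and> j \<in> VA \<inter> VB \<and> {i, j} \<notin> EA"
    and cancel: "\<And>i j. {i, j} \<in> F \<Longrightarrow> K i j = - B i j"
    and pA: "\<And>i. i \<in> VA \<Longrightarrow> p i = pA i" and pB: "\<And>i. i \<in> VB \<Longrightarrow> p i = pB i"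
  shows "stress_matrix (VA \<union> VB) ((EA \<union> EB) - F) p
    (\<lambda>i j. c * ext0 VA A i j + ext0 VA K i j + ext0 VB B i j)"
proof (rule stress_matrix_Diff)
  have finU: "finite (VA \<union> VB)" using fin by simp
  have "EA \<union> F \<subseteq> EA \<union> EB" using F(1) by blast
  then have "stress_matrix (VA \<union> VB) (EA \<union> EB) p (ext0 VA A)"
    "stress_matrix (VA \<union> VB) (EA \<union> EB) p (ext0 VA K)"
    "stress_matrix (VA \<union> VB) (EA \<union> EB) p (ext0 VB B)"
    using stress_matrix_ext0[OF finU _ stress_matrix_mono[OF stA]]
      stress_matrix_ext0[OF finU _ stress_matrix_mono[OF stK]]
      stress_matrix_ext0[OF finU _ stress_matrix_mono[OF stB]] pA pB by auto
  then show "stress_matrix (VA \<union> VB) (EA \<union> EB) p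
      (\<lambda>i j. c * ext0 VA A i j + ext0 VA K i j + ext0 VB B i j)"
    by (intro stress_matrix_add stress_matrix_scale)
next
  fix i j assume "i \<noteq> j" "{i, j} \<in> F"
  with F(2) stress_matrix_non_edge[OF stA] cancel show
    "c * ext0 VA A i j + ext0 VA K i j + ext0 VB B i j = 0"
    by (auto simp: ext0_def)
qed

lemma quad_forms_eq_0_imp_affine:
  fixes pA pB p :: "'v \<Rightarrow> 'a::euclidean_space"
  assumes fin: "finite VA" "finite VB"
    and A: "stress_matrix VA EA pA A" "psd_on VA A" "kernel_on VA A \<subseteq> affine_funs VA pA"
    and B: "stress_matrix VB EB pB B" "psd_on VB B" "kernel_on VB B \<subseteq> affine_funs VB pB"
    and frame: "affine_frame pA S" "S \<subseteq> VA \<inter> VB" "\<And>i. i \<in> S \<Longrightarrow> pA i = pB i"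
    and pA: "\<And>i. i \<in> VA \<Longrightarrow> p i = pA i" and pB: "\<And>i. i \<in> VB \<Longrightarrow> p i = pB i"
    and x: "\<And>i. i \<notin> VA \<union> VB \<Longrightarrow> x i = 0" "quad_form VA A x = 0" "quad_form VB B x = 0"
  shows "x \<in> affine_funs (VA \<union> VB) p"
proof -
  have "(\<lambda>i. if i \<in> VA then x i else 0) \<in> affine_funs VA pA"
    using psd_quad_form_eq_0_imp_kernel[OF fin(1) A(2) stress_matrix_sym[OF A(1)] x(2)] A(3) by blast
  then obtain a b where xA: "\<And>i. i \<in> VA \<Longrightarrow> x i = a \<bullet> pA i + b"
    by (auto simp: mem_affine_funs affine_fun_def fun_eq_iff) metis
  have "(\<lambda>i. if i \<in> VB then x i else 0) \<in> affine_funs VB pB"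
    using psd_quad_form_eq_0_imp_kernel[OF fin(2) B(2) stress_matrix_sym[OF B(1)] x(3)] B(3) by blast
  then obtain a' b' where xB: "\<And>i. i \<in> VB \<Longrightarrow> x i = a' \<bullet> pB i + b'"
    by (auto simp: mem_affine_funs affine_fun_def fun_eq_iff) metis
  have "\<forall>i\<in>S. (a - a') \<bullet> pA i + (b - b') = 0"
  proof
    fix i assume "i \<in> S"
    then have "x i = a \<bullet> pA i + b" "x i = a' \<bullet> pA i + b'"
      using frame(2,3) xA xB by auto
    then show "(a - a') \<bullet> pA i + (b - b') = 0" by (simp add: inner_diff_left)
  qed
  from affine_eq_0_on_frame[OF frame(1) this] have "a' = a" "b' = b" by auto
  then have "x = affine_fun (VA \<union> VB) p a b"
    using xA xB x(1) pA pB by (auto simp: affine_fun_def fun_eq_iff)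
  then show ?thesis by (auto simp: mem_affine_funs)
qed

lemma quad_form_add_matrix:
  "quad_form V (\<lambda>i j. M i j + N i j) x = quad_form V M x + quad_form V N x"
  by (simp add: quad_form_def algebra_simps sum.distrib)

lemma quad_form_scale_matrix: "quad_form V (\<lambda>i j. c * M i j) x = c * quad_form V M x"
  by (simp add: quad_form_def algebra_simps sum_distrib_left)

lemma psd_nullity_attachment:
  fixes pA pB p :: "'v \<Rightarrow> 'a::euclidean_space"
  assumes fin: "finite VA" "finite VB"
    and A: "stress_matrix VA EA pA A" "psd_on VA A" "kernel_on VA A \<subseteq> affine_funs VA pA"
    and B: "stress_matrix VB EB pB B" "psd_on VB B" "kernel_on VB B \<subseteq> affine_funs VB pB"
    and dom: "\<And>x. 0 \<le> quad_form VA K x + c * quad_form VA A x" and "c < c'"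
    and frame: "affine_frame pA S" "S \<subseteq> VA \<inter> VB" "\<And>i. i \<in> S \<Longrightarrow> pA i = pB i"
    and pA: "\<And>i. i \<in> VA \<Longrightarrow> p i = pA i" and pB: "\<And>i. i \<in> VB \<Longrightarrow> p i = pB i"
    and st: "stress_matrix (VA \<union> VB) E p (\<lambda>i j. c' * ext0 VA A i j + ext0 VA K i j + ext0 VB B i j)"
  shows "psd_on (VA \<union> VB) (\<lambda>i j. c' * ext0 VA A i j + ext0 VA K i j + ext0 VB B i j)"
    and "nullity_on (VA \<union> VB) (\<lambda>i j. c' * ext0 VA A i j + ext0 VA K i j + ext0 VB B i j) = DIM('a) + 1"
proof -
  let ?\<Omega> = "\<lambda>i j. c' * ext0 VA A i j + ext0 VA K i j + ext0 VB B i j"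
  have decomp: "quad_form (VA \<union> VB) ?\<Omega> x
      = (c' - c) * quad_form VA A x + (quad_form VA K x + c * quad_form VA A x) + quad_form VB B x" for x
    using fin by (simp add: quad_form_add_matrix quad_form_scale_matrix quad_form_ext0 algebra_simps)
  have parts: "0 \<le> (c' - c) * quad_form VA A x" "0 \<le> quad_form VB B x" for x
    using \<open>c < c'\<close> A(2) B(2) by (simp_all add: psd_on_quad_form)
  have zero: "quad_form VA A x = 0 \<and> quad_form VB B x = 0" if "quad_form (VA \<union> VB) ?\<Omega> x = 0" for x
  proof -
    have "(c' - c) * quad_form VA A x = 0" "quad_form VB B x = 0"
      using that decomp[of x] parts[of x] dom[of x] by linarith+
    then show ?thesis using \<open>c < c'\<close> by simp
  qed
  show "psd_on (VA \<union> VB) ?\<Omega>"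
    unfolding psd_on_quad_form using decomp parts dom by (metis add_nonneg_nonneg)
  have "kernel_on (VA \<union> VB) ?\<Omega> = affine_funs (VA \<union> VB) p"
  proof
    show "kernel_on (VA \<union> VB) ?\<Omega> \<subseteq> affine_funs (VA \<union> VB) p"
    proof
      fix x assume x: "x \<in> kernel_on (VA \<union> VB) ?\<Omega>"
      then have "quad_form VA A x = 0" "quad_form VB B x = 0"
        using zero quad_form_kernel by blast+
      with x show "x \<in> affine_funs (VA \<union> VB) p"
        by (intro quad_forms_eq_0_imp_affine[OF fin A B frame pA pB]) (auto simp: kernel_on_def)
    qed
  qed (rule affine_funs_subset_kernel[OF st])
  moreover have "affine_frame p S" using frame(1,2) pA by (subst affine_frame_cong) auto
  ultimately show "nullity_on (VA \<union> VB) ?\<Omega> = DIM('a) + 1"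
    using dim_affine_funs[of p S "VA \<union> VB"] frame(2) by (auto simp: nullity_on_def)
qed

theorem theorem7:
  fixes VA VB :: "'v set" and EA EB :: "'v set set"
    and pA pB :: "'v \<Rightarrow> 'a::euclidean_space"
    and \<Omega>A \<Omega>B :: "'v \<Rightarrow> 'v \<Rightarrow> real"
  assumes gA: "graph_on VA EA" and gB: "graph_on VB EB"
    and genA: "general_position VA pA" and genB: "general_position VB pB"
    and propA: "VA \<inter> VB \<subset> VA" and propB: "VA \<inter> VB \<subset> VB"
    and cardC: "card (VA \<inter> VB) \<ge> DIM('a) + 1"
    and agree: "\<forall>i\<in>VA \<inter> VB. pA i = pB i"
    and stA: "stress_matrix VA EA pA \<Omega>A" and psdA: "psd_on VA \<Omega>A"
    and nullA: "nullity_on VA \<Omega>A = DIM('a) + 1"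
    and stB: "stress_matrix VB EB pB \<Omega>B" and psdB: "psd_on VB \<Omega>B"
    and nullB: "nullity_on VB \<Omega>B = DIM('a) + 1"
    and rigA: "inf_rigid VA EA pA"
  defines "F \<equiv> {e \<in> EB - EA. e \<subseteq> VA \<inter> VB}"
    and "p \<equiv> (\<lambda>i. if i \<in> VA then pA i else pB i)"
  shows "\<exists>\<Omega>AK :: 'v \<Rightarrow> 'v \<Rightarrow> real.
           stress_matrix VA (EA \<union> F) pA \<Omega>AK \<and>
           (\<forall>i j. {i, j} \<in> F \<longrightarrow> \<Omega>AK i j = - \<Omega>B i j) \<and>
           (\<exists>c0>0. \<forall>c\<ge>c0.
              (let \<Omega>re = (\<lambda>i j. c * ext0 VA \<Omega>A i j + ext0 VA \<Omega>AK i j + ext0 VB \<Omega>B i j)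
               in stress_matrix (VA \<union> VB) ((EA \<union> EB) - F) p \<Omega>re \<and>
                  psd_on (VA \<union> VB) \<Omega>re \<and>
                  nullity_on (VA \<union> VB) \<Omega>re = DIM('a) + 1))"
proof -
  have finA: "finite VA" and finB: "finite VB" using gA gB by (simp_all add: graph_on_def)
  obtain S where S: "S \<subseteq> VA \<inter> VB" "affine_frame pA S"
    using general_position_obtains_frame[OF genA Int_lower1 cardC] by blast
  have pAB: "\<And>i. i \<in> S \<Longrightarrow> pA i = pB i" using S(1) agree by blast
  have kerA: "kernel_on VA \<Omega>A = affine_funs VA pA"
    using kernel_eq_affine_funs[OF stA nullA S(2)] S(1) by blast
  have kerB: "kernel_on VB \<Omega>B = affine_funs VB pB"
    using kernel_eq_affine_funs[OF stB nullB, of S] S affine_frame_cong[of S pA pB] pAB by blast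
  have F_pair: "\<And>i j. {i, j} \<in> F \<Longrightarrow> i \<in> VA \<inter> VB \<and> j \<in> VA \<inter> VB \<and> {i, j} \<notin> EA"
    by (auto simp: F_def)
  obtain \<Omega>AK where stAK: "stress_matrix VA (EA \<union> F) pA \<Omega>AK"
    and entries: "\<And>i j. {i, j} \<in> F \<Longrightarrow> \<Omega>AK i j = - \<Omega>B i j"
  proof (rule stress_with_prescribed_entries[OF gA S(2) _ rigA])
    show "e \<subseteq> VA \<and> card e = 2 \<and> e \<notin> EA" if "e \<in> F" for e
      using that gB by (auto simp: F_def graph_on_def)
    show "- \<Omega>B i j = - \<Omega>B j i" if "{i, j} \<in> F" for i j
      using F_pair[OF that] stress_matrix_sym[OF stB] by simp
  qed (use S(1) in auto)
  obtain c where "c \<ge> 0" and dom: "\<And>x. 0 \<le> quad_form VA \<Omega>AK x + c * quad_form VA \<Omega>A x"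
    using stress_quad_form_dominated[OF finA S(2) _ stA psdA _ stAK] S(1) kerA by auto
  have pA: "\<And>i. i \<in> VA \<Longrightarrow> p i = pA i" and pB: "\<And>i. i \<in> VB \<Longrightarrow> p i = pB i"
    using agree by (auto simp: p_def)
  show ?thesis
  proof (intro exI[of _ \<Omega>AK] conjI allI impI exI[of _ "c + 1"])
    fix c' assume "c + 1 \<le> c'"
    have st: "stress_matrix (VA \<union> VB) ((EA \<union> EB) - F) p
        (\<lambda>i j. c' * ext0 VA \<Omega>A i j + ext0 VA \<Omega>AK i j + ext0 VB \<Omega>B i j)"
      by (rule stress_matrix_attachment[OF finA finB stA stAK stB _ F_pair entries pA pB])
        (auto simp: F_def)
    with psd_nullity_attachment[OF finA finB stA psdA _ stB psdB _ dom _ S(2,1) pAB pA pB st]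
      kerA kerB \<open>c + 1 \<le> c'\<close>
    show "let \<Omega>re = (\<lambda>i j. c' * ext0 VA \<Omega>A i j + ext0 VA \<Omega>AK i j + ext0 VB \<Omega>B i j)
      in stress_matrix (VA \<union> VB) ((EA \<union> EB) - F) p \<Omega>re \<and> psd_on (VA \<union> VB) \<Omega>re \<and>
         nullity_on (VA \<union> VB) \<Omega>re = DIM('a) + 1"
      by (simp add: Let_def)
  qed (use stAK entries \<open>c \<ge> 0\<close> in auto)
qed

end
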